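(* Let $U=U_1\times\cdots\times U_m$ with $U_i\subseteq\mathbb{R}^p$ be convex, $C\subseteq\mathbb{R}^{mp}$, $\overline{U}=U\cap C$, with $0\in\overline{U}$. Let $b\in\mathbb{R}^m$, let $f_1:\mathbb{R}^{n_1}\to\mathbb{R}$, $f_2:\mathbb{R}^{n_2}\to\mathbb{R}$ be concave with $f_1(0)=f_2(0)=0$, and for each $i\in[m]$ let $g_i(x,y,u_i)$ be convex in $(x,y)$ and concave in $u_i$, with $g_i(0,0,u_i)\le0$ for all $u\in U$ and $g_i(x,y,0)\ge0$ for all feasible $x,y$. For a set $S$ define $$z^{\rm ad}(S)=\sup_{x,\ y:S\to\mathbb{R}^{n_2}}\Big\{f_1(x)+\inf_{u\in S}f_2(y(u)):\ g_i(x,y(u),u_i)\le b_i\ \forall u\in S,\ \forall i\Big\},$$ $$z^{\rm st}(S)=\sup_{x,y}\{f_1(x)+f_2(y):\ g_i(x,y,u_i)\le b_i\ \forall u\in S,\ \forall i\},$$ and $z_{\rm aro}=z^{\rm ad}(U)$, $z_{\rm acp}=z^{\rm ad}(\overline{U})$, $z_{\rm ro}=z^{\rm st}(U)$, $z_{\rm cp}=z^{\rm st}(\overline{U})$. Let $\rho_{\rm ro}=\rho(U,\Pi(\overline{U}))$ and $\rho_{\rm aro}=\rho(U,\overline{U})$. Assume $\rho_{\rm aro}>0$, $z_{\rm acp}>0$ and $z_{\rm ro}<\infty$. Then $$\frac{z_{\rm cp}}{z_{\rm ro}}\le\frac{1}{\rho_{\rm ro}},\qquad\frac{z_{\rm acp}}{z_{\rm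 aro}}\le\frac{1}{\rho_{\rm aro}}.$$ Furthermore, the bounds are tight.
   Context: $u=(u_1,\dots,u_m)$ with $u_i\in\mathbb{R}^p$; $\Pi_i(S)$ is the projection of $S$ onto the $i$-th block, $\Pi(S)=\Pi_1(S)\times\cdots\times\Pi_m(S)$. For $r\ge0$, $rS=\{rx:x\in S\}$; $\rho(S_1,S_2)=\max\{\rho\ge0:\rho S_1\subseteq S_2\}$. *)

theory Defs
  imports "HOL-Analysis.Analysis"
begin

text \<open>Uncertainty vectors u = (u_1,...,u_m), u_i in R^p, are modelled as functions
  nat \<Rightarrow> 'c (with 'c a Euclidean space playing the role of R^p) that vanish outside
  the index range {0..<m}.\<close>

definition blockvecs :: "nat \<Rightarrow> (nat \<Rightarrow> 'c::real_vector) set" where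
  "blockvecs m = {u. \<forall>i. m \<le> i \<longrightarrow> u i = 0}"

definition prodset :: "nat \<Rightarrow> (nat \<Rightarrow> 'c::real_vector set) \<Rightarrow> (nat \<Rightarrow> 'c) set" where
  "prodset m Us = {u \<in> blockvecs m. \<forall>i<m. u i \<in> Us i}"

definition proj :: "nat \<Rightarrow> (nat \<Rightarrow> 'c) set \<Rightarrow> 'c set" where
  "proj i S = (\<lambda>u. u i) ` S"

definition Proj :: "nat \<Rightarrow> (nat \<Rightarrow> 'c::real_vector) set \<Rightarrow> (nat \<Rightarrow> 'c) set" where
  "Proj m S = prodset m (\<lambda>i. proj i S)"

definition scaleS :: "real \<Rightarrow> (nat \<Rightarrow> 'c::real_vector) set \<Rightarrow> (nat \<Rightarrow> 'c) set" where
  "scaleS r S = (\<lambda>u. \<lambda>i. r *\<^sub>R u i) ` S"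

definition rho_set :: "(nat \<Rightarrow> 'c::real_vector) set \<Rightarrow> (nat \<Rightarrow> 'c) set \<Rightarrow> real set" where
  "rho_set S1 S2 = {r. 0 \<le> r \<and> scaleS r S1 \<subseteq> S2}"

text \<open>rho(S1,S2) = max {rho >= 0 : rho S1 \<subseteq> S2} (taken as the supremum; existence of the
  maximum/finiteness is an explicit hypothesis where used).\<close>
definition rho :: "(nat \<Rightarrow> 'c::real_vector) set \<Rightarrow> (nat \<Rightarrow> 'c) set \<Rightarrow> real" where
  "rho S1 S2 = Sup (rho_set S1 S2)"

definition z_st :: "nat \<Rightarrow> (nat \<Rightarrow> 'a \<Rightarrow> 'b \<Rightarrow> 'c \<Rightarrow> real) \<Rightarrow> (nat \<Rightarrow> real)
    \<Rightarrow> ('a \<Rightarrow> real) \<Rightarrow> ('b \<Rightarrow> real) \<Rightarrow> (nat \<Rightarrow> 'c) set \<Rightarrow> ereal" where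
  "z_st m g b f1 f2 S =
     Sup {ereal (f1 x + f2 y) | x y. \<forall>u\<in>S. \<forall>i<m. g i x y (u i) \<le> b i}"

definition z_ad :: "nat \<Rightarrow> (nat \<Rightarrow> 'a \<Rightarrow> 'b \<Rightarrow> 'c \<Rightarrow> real) \<Rightarrow> (nat \<Rightarrow> real)
    \<Rightarrow> ('a \<Rightarrow> real) \<Rightarrow> ('b \<Rightarrow> real) \<Rightarrow> (nat \<Rightarrow> 'c) set \<Rightarrow> ereal" where
  "z_ad m g b f1 f2 S =
     Sup {ereal (f1 x) + (INF u\<in>S. ereal (f2 (y u))) | x (y :: (nat \<Rightarrow> 'c) \<Rightarrow> 'b).
            \<forall>u\<in>S. \<forall>i<m. g i x (y u) (u i) \<le> b i}"

text \<open>All standing hypotheses of the theorem for the data (m, U_1..U_m, C, b, f1, f2, g).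
  Here U = prodset m Us and Ubar = U \<inter> C.\<close>
definition setting :: "nat \<Rightarrow> (nat \<Rightarrow> 'c::euclidean_space set) \<Rightarrow> (nat \<Rightarrow> 'c) set \<Rightarrow> (nat \<Rightarrow> real)
    \<Rightarrow> ('a::euclidean_space \<Rightarrow> real) \<Rightarrow> ('b::euclidean_space \<Rightarrow> real)
    \<Rightarrow> (nat \<Rightarrow> 'a \<Rightarrow> 'b \<Rightarrow> 'c \<Rightarrow> real) \<Rightarrow> bool" where
  "setting m Us C b f1 f2 g \<longleftrightarrow>
     (\<forall>i<m. convex (Us i)) \<and>
     C \<subseteq> blockvecs m \<and>
     (\<lambda>_. 0) \<in> prodset m Us \<inter> C \<and>
     concave_on UNIV f1 \<and> concave_on UNIV f2 \<and> f1 0 = 0 \<and> f2 0 = 0 \<and>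
     (\<forall>i<m. \<forall>v. convex_on UNIV (\<lambda>(x, y). g i x y v)) \<and>
     (\<forall>i<m. \<forall>x y. concave_on UNIV (\<lambda>v. g i x y v)) \<and>
     (\<forall>u\<in>prodset m Us. \<forall>i<m. g i 0 0 (u i) \<le> 0) \<and>
     (\<forall>x y. (\<exists>u\<in>prodset m Us \<inter> C. \<forall>j<m. g j x y (u j) \<le> b j)
            \<longrightarrow> (\<forall>i<m. 0 \<le> g i x y 0)) \<and>
     bdd_above (rho_set (prodset m Us) (Proj m (prodset m Us \<inter> C))) \<and>
     bdd_above (rho_set (prodset m Us) (prodset m Us \<inter> C)) \<and>
     rho (prodset m Us) (prodset m Us \<inter> C) > 0 \<and>
     z_ad m g b f1 f2 (prodset m Us \<inter> C) > 0 \<and>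
     z_st m g b f1 f2 (prodset m Us) < \<infinity>"

end

theory Submission
  imports Defs
begin

text \<open>If 0 < r \<le> 1 and r U \<subseteq> U \<inter> C, a solution (x, y) feasible for U \<inter> C is turned into
  one feasible for U by scaling: convexity of g_i in (x, y) with g_i(0, 0, u_i) \<le> 0 and
  concavity in u_i with g_i(x, y, 0) \<ge> 0 give g_i(r x, r y, u_i) \<le> g_i(x, y, r u_i) \<le> b_i,
  and concavity of f_1, f_2 with f(0) = 0 gives f(r x) \<ge> r f(x). In the adaptive problem the
  rule for u is r y(r u); in the static problem only the single blocks r u_i have to be realised
  by points of U \<inter> C, so r U \<subseteq> \<Pi>(U \<inter> C) suffices. Hence r z(U \<inter> C) \<le> z(U) \<le> z(U \<inter> C),
  and letting r tend to \<rho> gives the bounds. They are attained for m = 1, U = [0, 1],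
  C = {u. u \<le> r} and the problem of maximising x subject to u x \<le> 1.\<close>

lemma ereal_mult_Sup_leI:
  fixes A :: "ereal set"
  assumes "0 < r" and "\<And>a. a \<in> A \<Longrightarrow> ereal r * a \<le> z"
  shows "ereal r * Sup A \<le> z"
proof -
  have "Sup A \<le> z / ereal r"
    using assms by (intro Sup_least) (simp add: ereal_le_divide_pos)
  then show ?thesis
    using assms(1) by (simp add: ereal_le_divide_pos)
qed

lemma ereal_divide_le_inverse:
  fixes a b :: ereal
  assumes "b \<le> a" and "0 < r" and "r \<le> 1" and "ereal r * a \<le> b"
  shows "a / b \<le> 1 / ereal r"
proof -
  have inv: "1 / ereal r = ereal (1 / r)" and one_le: "1 \<le> 1 / r"
    using assms(2,3) by (simp_all add: one_ereal_def)
  show ?thesis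
  proof (cases b)
    case (real \<beta>)
    with assms obtain \<alpha> where a: "a = ereal \<alpha>" and "\<beta> \<le> \<alpha>" "r * \<alpha> \<le> \<beta>"
      by (cases a) auto
    consider "\<beta> < 0" | "\<beta> = 0" | "0 < \<beta>" by linarith
    then have "\<alpha> / \<beta> \<le> 1 / r"
    proof cases
      case 1
      with \<open>\<beta> \<le> \<alpha>\<close> have "\<alpha> / \<beta> \<le> 1" by (simp add: divide_le_eq)
      with one_le show ?thesis by linarith
    next
      case 3
      with \<open>r * \<alpha> \<le> \<beta>\<close> \<open>0 < r\<close> show ?thesis by (simp add: field_simps)
    qed (use \<open>0 < r\<close> in simp)
    moreover have "\<alpha> = 0" if "\<beta> = 0"
      using that \<open>\<beta> \<le> \<alpha>\<close> \<open>r * \<alpha> \<le> \<beta>\<close> \<open>0 < r\<close> by (simp add: mult_le_0_iff)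
    ultimately show ?thesis
      using real a inv by auto
  qed (use assms inv in \<open>auto simp: divide_ereal_def\<close>)
qed

lemma le_inverse_Sup:
  fixes q :: ereal and R :: "real set"
  assumes "R \<noteq> {}" and "bdd_above R" and "0 < Sup R"
    and le: "\<And>r. r \<in> R \<Longrightarrow> 0 < r \<Longrightarrow> q \<le> 1 / ereal r"
  shows "q \<le> 1 / ereal (Sup R)"
proof -
  obtain r0 where "r0 \<in> R" "0 < r0"
    using assms(1-3) by (auto simp: less_cSup_iff)
  have inv: "1 / ereal r = ereal (1 / r)" if "0 < r" for r
    using that by (simp add: one_ereal_def)
  show ?thesis
  proof (cases q)
    case (real \<kappa>)
    have "\<kappa> \<le> 1 / Sup R"
    proof (cases "0 < \<kappa>")
      case True
      have "r \<le> 1 / \<kappa>" if "r \<in> R" for r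
      proof (cases "0 < r")
        case True
        with le[OF \<open>r \<in> R\<close>] real inv \<open>0 < \<kappa>\<close> show ?thesis by (simp add: field_simps)
      next
        case False
        with \<open>0 < \<kappa>\<close> show ?thesis by (smt (verit) divide_pos_pos)
      qed
      then have "Sup R \<le> 1 / \<kappa>"
        using assms(1) by (intro cSup_least) auto
      with True \<open>0 < Sup R\<close> show ?thesis by (simp add: field_simps)
    qed (use \<open>0 < Sup R\<close> in \<open>smt (verit) divide_pos_pos\<close>)
    with real inv[OF \<open>0 < Sup R\<close>] show ?thesis by simp
  next
    case PInf
    with le[OF \<open>r0 \<in> R\<close> \<open>0 < r0\<close>] inv[OF \<open>0 < r0\<close>] show ?thesis by simp
  qed simp
qed

lemma scaleS_scaleS: "scaleS a (scaleS b X) = scaleS (a * b) X"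
  unfolding scaleS_def by (auto simp: image_image)

lemma scaleS_mono: "X \<subseteq> Y \<Longrightarrow> scaleS a X \<subseteq> scaleS a Y"
  unfolding scaleS_def by auto

lemma scaleS_power_subset:
  assumes "scaleS r U \<subseteq> U"
  shows "scaleS (r ^ n) U \<subseteq> U"
proof (induction n)
  case (Suc n)
  have "scaleS (r ^ Suc n) U = scaleS r (scaleS (r ^ n) U)"
    by (simp add: scaleS_scaleS)
  also have "\<dots> \<subseteq> U"
    using Suc scaleS_mono assms by blast
  finally show ?case .
qed (simp add: scaleS_def)

text \<open>If r > 1 shrank U into S \<subseteq> U, so would every power r^n, contradicting boundedness.\<close>

lemma rho_set_le_1:
  assumes "bdd_above (rho_set U S)" and "S \<subseteq> U" and "r \<in> rho_set U S"
  shows "r \<le> 1"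
proof (rule ccontr)
  assume "\<not> r \<le> 1"
  then have "1 < r" by simp
  have rS: "scaleS r U \<subseteq> S"
    using assms(3) by (simp add: rho_set_def)
  have "r ^ Suc n \<in> rho_set U S" for n
  proof -
    have "scaleS (r ^ Suc n) U = scaleS r (scaleS (r ^ n) U)"
      by (simp add: scaleS_scaleS)
    also have "\<dots> \<subseteq> S"
      using scaleS_power_subset[of r U n] rS assms(2) scaleS_mono by blast
    finally show ?thesis
      using \<open>1 < r\<close> by (simp add: rho_set_def)
  qed
  moreover obtain M where "\<And>s. s \<in> rho_set U S \<Longrightarrow> s \<le> M"
    using assms(1) by (auto simp: bdd_above_def)
  moreover obtain n where "M < r ^ n"
    using real_arch_pow[OF \<open>1 < r\<close>] by blast
  ultimately show False
    using \<open>1 < r\<close> by (smt (verit) power_increasing_iff lessI less_imp_le)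
qed

lemma zero_in_rho_set: "(\<lambda>_. 0) \<in> S \<Longrightarrow> 0 \<in> rho_set U S"
  unfolding rho_set_def scaleS_def by auto

lemma rho_mono:
  assumes "S \<subseteq> S'" and "(\<lambda>_. 0) \<in> S" and "bdd_above (rho_set U S')"
  shows "rho U S \<le> rho U S'"
  unfolding rho_def
  using assms zero_in_rho_set[of S U] scaleS_mono
  by (intro cSup_subset_mono) (auto simp: rho_set_def)

lemma divide_le_inverse_rho:
  fixes a b :: ereal
  assumes "b \<le> a" and "S \<subseteq> U" and "(\<lambda>_. 0) \<in> S"
    and "bdd_above (rho_set U S)" and "0 < rho U S"
    and scaling: "\<And>r. r \<in> rho_set U S \<Longrightarrow> 0 < r \<Longrightarrow> r \<le> 1 \<Longrightarrow> ereal r * a \<le> b"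
  shows "a / b \<le> 1 / ereal (rho U S)"
  unfolding rho_def
proof (rule le_inverse_Sup)
  fix r assume "r \<in> rho_set U S" and "0 < r"
  moreover from this have "r \<le> 1"
    using rho_set_le_1 assms(2,4) by blast
  ultimately show "a / b \<le> 1 / ereal r"
    using ereal_divide_le_inverse[OF \<open>b \<le> a\<close>] scaling by blast
qed (use assms zero_in_rho_set[OF assms(3), of U] in \<open>auto simp: rho_def\<close>)

lemma subset_Proj: "S \<subseteq> blockvecs m \<Longrightarrow> S \<subseteq> Proj m S"
  unfolding Proj_def prodset_def proj_def by auto

lemma Proj_subset_prodset: "S \<subseteq> prodset m Us \<Longrightarrow> Proj m S \<subseteq> prodset m Us"
  unfolding Proj_def prodset_def proj_def by fastforce

lemma concave_scaleR_ge:
  fixes f :: "'a::real_vector \<Rightarrow> real"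
  assumes "concave_on UNIV f" and "f 0 = 0" and "0 \<le> r" and "r \<le> 1"
  shows "r * f x \<le> f (r *\<^sub>R x)"
  using concave_onD[OF assms(1), of r 0 x] assms by simp

lemma convex_concave_scaleR_le:
  fixes G :: "'a::real_vector \<Rightarrow> 'b::real_vector \<Rightarrow> 'c::real_vector \<Rightarrow> real"
  assumes "convex_on UNIV (\<lambda>(x, y). G x y v)" and "concave_on UNIV (G x y)"
    and "G 0 0 v \<le> 0" and "0 \<le> G x y 0" and "0 \<le> r" and "r \<le> 1"
  shows "G (r *\<^sub>R x) (r *\<^sub>R y) v \<le> G x y (r *\<^sub>R v)"
proof -
  have "G (r *\<^sub>R x) (r *\<^sub>R y) v \<le> (1 - r) * G 0 0 v + r * G x y v"
    using convex_onD[OF assms(1), of r "(0, 0)" "(x, y)"] assms(5,6) by simp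
  also have "\<dots> \<le> (1 - r) * G x y 0 + r * G x y v"
    using assms(3-6) by (intro add_right_mono mult_left_mono) auto
  also have "\<dots> \<le> G x y (r *\<^sub>R v)"
    using concave_onD[OF assms(2), of r 0 v] assms(5,6) by simp
  finally show ?thesis .
qed

lemma z_st_antimono: "S \<subseteq> T \<Longrightarrow> z_st m g b f1 f2 T \<le> z_st m g b f1 f2 S"
  unfolding z_st_def by (intro Sup_subset_mono) blast

lemma z_ad_antimono:
  fixes g :: "nat \<Rightarrow> 'a \<Rightarrow> 'b \<Rightarrow> 'c \<Rightarrow> real"
  assumes "S \<subseteq> T"
  shows "z_ad m g b f1 f2 T \<le> z_ad m g b f1 f2 S"
  unfolding z_ad_def
proof (rule Sup_mono, safe)
  fix x and y :: "(nat \<Rightarrow> 'c) \<Rightarrow> 'b"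
  assume "\<forall>u\<in>T. \<forall>i<m. g i x (y u) (u i) \<le> b i"
  then show "\<exists>a\<in>{ereal (f1 x) + (INF u\<in>S. ereal (f2 (y u))) |x y.
      \<forall>u\<in>S. \<forall>i<m. g i x (y u) (u i) \<le> b i}. ereal (f1 x) + (INF u\<in>T. ereal (f2 (y u))) \<le> a"
    using assms by (intro bexI[of _ "ereal (f1 x) + (INF u\<in>S. ereal (f2 (y u)))"]
        add_left_mono INF_superset_mono) auto
qed

locale concave_convex_program =
  fixes m :: nat
    and g :: "nat \<Rightarrow> 'a::real_vector \<Rightarrow> 'b::real_vector \<Rightarrow> 'c::real_vector \<Rightarrow> real"
    and b :: "nat \<Rightarrow> real" and f1 :: "'a \<Rightarrow> real" and f2 :: "'b \<Rightarrow> real"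
    and U V :: "(nat \<Rightarrow> 'c) set"
  assumes f1_concave: "concave_on UNIV f1" and f1_zero: "f1 0 = 0"
    and f2_concave: "concave_on UNIV f2" and f2_zero: "f2 0 = 0"
    and g_convex: "i < m \<Longrightarrow> convex_on UNIV (\<lambda>(x, y). g i x y v)"
    and g_concave: "i < m \<Longrightarrow> concave_on UNIV (g i x y)"
    and g_origin_nonpos: "u \<in> U \<Longrightarrow> i < m \<Longrightarrow> g i 0 0 (u i) \<le> 0"
    and g_feasible_nonneg: "w \<in> V \<Longrightarrow> \<forall>j<m. g j x y (w j) \<le> b j \<Longrightarrow> i < m \<Longrightarrow> 0 \<le> g i x y 0"
begin

lemma scaled_solution_feasible:
  assumes "u \<in> U" and "w \<in> V" and "\<forall>j<m. g j x y (w j) \<le> b j" and "i < m"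
    and "w i = r *\<^sub>R u i" and "0 \<le> r" and "r \<le> 1"
  shows "g i (r *\<^sub>R x) (r *\<^sub>R y) (u i) \<le> b i"
proof -
  have "g i (r *\<^sub>R x) (r *\<^sub>R y) (u i) \<le> g i x y (w i)"
    unfolding \<open>w i = r *\<^sub>R u i\<close> using assms
    by (intro convex_concave_scaleR_le g_convex g_concave g_origin_nonpos g_feasible_nonneg)
  with assms(3,4) show ?thesis by fastforce
qed

lemma z_st_scaling:
  assumes "0 < r" and "r \<le> 1" and "scaleS r U \<subseteq> Proj m V"
  shows "ereal r * z_st m g b f1 f2 V \<le> z_st m g b f1 f2 U"
  unfolding z_st_def[of _ _ _ _ _ V]
proof (rule ereal_mult_Sup_leI[OF \<open>0 < r\<close>], safe)
  fix x y assume feasible: "\<forall>w\<in>V. \<forall>i<m. g i x y (w i) \<le> b i"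
  have "\<forall>u\<in>U. \<forall>i<m. g i (r *\<^sub>R x) (r *\<^sub>R y) (u i) \<le> b i"
  proof (intro ballI allI impI)
    fix u i assume "u \<in> U" and "i < m"
    then have "(\<lambda>j. r *\<^sub>R u j) \<in> Proj m V"
      using assms(3) unfolding scaleS_def by blast
    then obtain w where "w \<in> V" and "w i = r *\<^sub>R u i"
      using \<open>i < m\<close> unfolding Proj_def prodset_def proj_def by auto
    with \<open>u \<in> U\<close> \<open>i < m\<close> feasible assms(1,2) show "g i (r *\<^sub>R x) (r *\<^sub>R y) (u i) \<le> b i"
      by (intro scaled_solution_feasible[OF \<open>u \<in> U\<close> \<open>w \<in> V\<close>]) auto
  qed
  then have "ereal (f1 (r *\<^sub>R x) + f2 (r *\<^sub>R y)) \<le> z_st m g b f1 f2 U"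
    unfolding z_st_def by (intro Sup_upper) blast
  moreover have "r * (f1 x + f2 y) \<le> f1 (r *\<^sub>R x) + f2 (r *\<^sub>R y)"
    using concave_scaleR_ge[OF f1_concave f1_zero, of r x]
      concave_scaleR_ge[OF f2_concave f2_zero, of r y] assms(1,2) by (simp add: distrib_left)
  ultimately show "ereal r * ereal (f1 x + f2 y) \<le> z_st m g b f1 f2 U"
    by (metis order_trans ereal_less_eq(3) times_ereal.simps(1))
qed

lemma z_ad_scaling:
  assumes "0 < r" and "r \<le> 1" and "scaleS r U \<subseteq> V"
  shows "ereal r * z_ad m g b f1 f2 V \<le> z_ad m g b f1 f2 U"
  unfolding z_ad_def[of _ _ _ _ _ V]
proof (rule ereal_mult_Sup_leI[OF \<open>0 < r\<close>], safe)
  fix x and y :: "(nat \<Rightarrow> 'c) \<Rightarrow> 'b"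
  assume feasible: "\<forall>w\<in>V. \<forall>i<m. g i x (y w) (w i) \<le> b i"
  define scale where "scale u = (\<lambda>j. r *\<^sub>R u j)" for u :: "nat \<Rightarrow> 'c"
  define y' where "y' u = r *\<^sub>R y (scale u)" for u
  have scale_in: "scale u \<in> V" if "u \<in> U" for u
    using assms(3) that unfolding scaleS_def scale_def by blast
  have "\<forall>u\<in>U. \<forall>i<m. g i (r *\<^sub>R x) (y' u) (u i) \<le> b i"
    unfolding y'_def using scale_in feasible assms(1,2)
    by (intro ballI allI impI scaled_solution_feasible) (auto simp: scale_def)
  then have "ereal (f1 (r *\<^sub>R x)) + (INF u\<in>U. ereal (f2 (y' u))) \<le> z_ad m g b f1 f2 U"
    unfolding z_ad_def by (intro Sup_upper) blast
  moreover have "ereal r * (INF w\<in>V. ereal (f2 (y w))) \<le> (INF u\<in>U. ereal (f2 (y' u)))"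
  proof (rule INF_greatest)
    fix u assume "u \<in> U"
    have "ereal r * (INF w\<in>V. ereal (f2 (y w))) \<le> ereal r * ereal (f2 (y (scale u)))"
      using assms(1) scale_in[OF \<open>u \<in> U\<close>] by (intro ereal_mult_left_mono INF_lower) auto
    also have "\<dots> = ereal (r * f2 (y (scale u)))"
      by simp
    also have "\<dots> \<le> ereal (f2 (y' u))"
      unfolding y'_def using concave_scaleR_ge[OF f2_concave f2_zero] assms(1,2) by simp
    finally show "ereal r * (INF w\<in>V. ereal (f2 (y w))) \<le> ereal (f2 (y' u))" .
  qed
  moreover have "r * f1 x \<le> f1 (r *\<^sub>R x)"
    using concave_scaleR_ge[OF f1_concave f1_zero] assms(1,2) by simp
  ultimately show "ereal r * (ereal (f1 x) + (INF w\<in>V. ereal (f2 (y w)))) \<le> z_ad m g b f1 f2 U"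
    by (subst ereal_distrib_left) (auto elim!: order_trans[rotated] intro!: add_mono)
qed

end

lemma setting_concave_convex_program:
  "setting m Us C b f1 f2 g \<Longrightarrow>
     concave_convex_program m g b f1 f2 (prodset m Us) (prodset m Us \<inter> C)"
  unfolding setting_def by unfold_locales blast+

lemma setting_ratio_bounds:
  fixes Us :: "nat \<Rightarrow> 'c::euclidean_space set"
    and f1 :: "'a::euclidean_space \<Rightarrow> real" and f2 :: "'b::euclidean_space \<Rightarrow> real"
  assumes "setting m Us C b f1 f2 g"
  defines "U \<equiv> prodset m Us" and "V \<equiv> prodset m Us \<inter> C"
  shows "z_st m g b f1 f2 V / z_st m g b f1 f2 U \<le> 1 / ereal (rho U (Proj m V))"
    and "z_ad m g b f1 f2 V / z_ad m g b f1 f2 U \<le> 1 / ereal (rho U V)"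
proof -
  interpret concave_convex_program m g b f1 f2 U V
    using setting_concave_convex_program[OF assms(1)] by (simp add: U_def V_def)
  have "V \<subseteq> U" and "V \<subseteq> blockvecs m" and "(\<lambda>_. 0) \<in> V"
    and bdd_Proj: "bdd_above (rho_set U (Proj m V))" and bdd: "bdd_above (rho_set U V)"
    and "0 < rho U V"
    using assms(1) by (auto simp: setting_def U_def V_def)
  then have "V \<subseteq> Proj m V" and "Proj m V \<subseteq> U"
    by (simp_all add: subset_Proj Proj_subset_prodset U_def)
  have "rho U V \<le> rho U (Proj m V)"
    using rho_mono \<open>V \<subseteq> Proj m V\<close> \<open>(\<lambda>_. 0) \<in> V\<close> bdd_Proj .
  show "z_st m g b f1 f2 V / z_st m g b f1 f2 U \<le> 1 / ereal (rho U (Proj m V))"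
    using \<open>V \<subseteq> U\<close> \<open>V \<subseteq> Proj m V\<close> \<open>(\<lambda>_. 0) \<in> V\<close> \<open>0 < rho U V\<close> \<open>rho U V \<le> rho U (Proj m V)\<close>
    by (intro divide_le_inverse_rho z_st_antimono \<open>Proj m V \<subseteq> U\<close> bdd_Proj z_st_scaling)
      (auto simp: rho_set_def)
  show "z_ad m g b f1 f2 V / z_ad m g b f1 f2 U \<le> 1 / ereal (rho U V)"
    using \<open>(\<lambda>_. 0) \<in> V\<close> \<open>0 < rho U V\<close>
    by (intro divide_le_inverse_rho z_ad_antimono \<open>V \<subseteq> U\<close> bdd z_ad_scaling)
      (auto simp: rho_set_def)
qed

definition block_interval :: "real \<Rightarrow> (nat \<Rightarrow> real) set" where
  "block_interval c = {u \<in> blockvecs 1. 0 \<le> u 0 \<and> u 0 \<le> c}"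

lemma prodset_unit_interval: "prodset 1 (\<lambda>_. {0..1}) = block_interval 1"
  unfolding prodset_def block_interval_def by auto

lemma block_interval_Int:
  "r \<le> 1 \<Longrightarrow> block_interval 1 \<inter> {u \<in> blockvecs 1. u 0 \<le> r} = block_interval r"
  unfolding block_interval_def by auto

lemma Proj_block_interval: "Proj 1 (block_interval c) = block_interval c"
  unfolding Proj_def prodset_def proj_def block_interval_def blockvecs_def
  by (auto simp: image_def)

lemma rho_set_block_interval:
  assumes "0 \<le> r"
  shows "rho_set (block_interval 1) (block_interval r) = {0..r}"
proof (intro set_eqI iffI)
  fix s assume s: "s \<in> rho_set (block_interval 1) (block_interval r)"
  have "(\<lambda>i. if i = 0 then 1 else 0) \<in> block_interval 1"
    by (simp add: block_interval_def blockvecs_def)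
  then have "(\<lambda>i. s *\<^sub>R (if i = 0 then 1 else 0)) \<in> block_interval r"
    using s unfolding rho_set_def scaleS_def by blast
  with s show "s \<in> {0..r}"
    by (simp add: block_interval_def rho_set_def)
next
  fix s assume "s \<in> {0..r}"
  then show "s \<in> rho_set (block_interval 1) (block_interval r)"
    unfolding rho_set_def scaleS_def block_interval_def blockvecs_def
    by (auto intro: order_trans[OF mult_left_le])
qed

lemma rho_block_interval: "0 \<le> r \<Longrightarrow> rho (block_interval 1) (block_interval r) = r"
  by (simp add: rho_def rho_set_block_interval)

lemma block_interval_constraint_iff:
  assumes "0 \<le> c"
  shows "(\<forall>u\<in>block_interval c. \<forall>i<1. u i * x \<le> 1) \<longleftrightarrow> c * x \<le> 1"
proof
  assume "\<forall>u\<in>block_interval c. \<forall>i<1. u i * x \<le> 1"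
  moreover have "(\<lambda>i. if i = 0 then c else 0) \<in> block_interval c"
    using assms by (simp add: block_interval_def blockvecs_def)
  ultimately show "c * x \<le> 1" by fastforce
next
  assume "c * x \<le> 1"
  have "u 0 * x \<le> 1" if "0 \<le> u 0" and "u 0 \<le> c" for u :: "nat \<Rightarrow> real"
    using that \<open>c * x \<le> 1\<close> mult_right_mono[OF \<open>u 0 \<le> c\<close>, of x]
    by (cases "0 \<le> x") (auto intro: order_trans[OF mult_nonneg_nonpos])
  then show "\<forall>u\<in>block_interval c. \<forall>i<1. u i * x \<le> 1"
    by (simp add: block_interval_def)
qed

lemma Sup_ereal_scaled_le_1:
  assumes "0 < c"
  shows "Sup {ereal x | x. c * x \<le> 1} = ereal (1 / c)"
  using assms by (intro antisym Sup_least Sup_upper) (auto simp: field_simps intro!: exI[of _ "1 / c"])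

lemma z_st_block_interval:
  assumes "0 < c"
  shows "z_st 1 (\<lambda>i x (y::real) v. v * x) (\<lambda>_. 1) (\<lambda>x. x) (\<lambda>_. 0) (block_interval c) = ereal (1 / c)"
proof -
  have "{ereal (x + 0) | x (y::real). \<forall>u\<in>block_interval c. \<forall>i<1. u i * x \<le> 1}
      = {ereal x | x. c * x \<le> 1}"
    using block_interval_constraint_iff assms by auto
  with assms show ?thesis
    unfolding z_st_def by (simp add: Sup_ereal_scaled_le_1)
qed

lemma z_ad_block_interval:
  assumes "0 < c"
  shows "z_ad 1 (\<lambda>i x (y::real) v. v * x) (\<lambda>_. 1) (\<lambda>x. x) (\<lambda>_. 0) (block_interval c) = ereal (1 / c)"
proof -
  have "block_interval c \<noteq> {}"
    using assms by (auto simp: block_interval_def blockvecs_def intro!: exI[of _ "\<lambda>_. 0"])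
  then have "{ereal x + (INF u\<in>block_interval c. ereal 0) | x (y :: (nat \<Rightarrow> real) \<Rightarrow> real).
      \<forall>u\<in>block_interval c. \<forall>i<1. u i * x \<le> 1} = {ereal x | x. c * x \<le> 1}"
    using block_interval_constraint_iff assms by auto
  with assms show ?thesis
    unfolding z_ad_def by (simp add: Sup_ereal_scaled_le_1)
qed

lemma example_attains_bounds:
  assumes "0 < r" and "r \<le> 1"
  defines "Us \<equiv> \<lambda>_::nat. {0..1::real}" and "C \<equiv> {u \<in> blockvecs 1. u 0 \<le> r}"
    and "g \<equiv> \<lambda>(i::nat) (x::real) (y::real) (v::real). v * x"
  shows "setting 1 Us C (\<lambda>_. 1) (\<lambda>x. x) (\<lambda>_. 0) g"
    and "rho (prodset 1 Us) (Proj 1 (prodset 1 Us \<inter> C)) = r"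
    and "rho (prodset 1 Us) (prodset 1 Us \<inter> C) = r"
    and "z_st 1 g (\<lambda>_. 1) (\<lambda>x. x) (\<lambda>_. 0) (prodset 1 Us \<inter> C)
           / z_st 1 g (\<lambda>_. 1) (\<lambda>x. x) (\<lambda>_. 0) (prodset 1 Us) = 1 / ereal r"
    and "z_ad 1 g (\<lambda>_. 1) (\<lambda>x. x) (\<lambda>_. 0) (prodset 1 Us \<inter> C)
           / z_ad 1 g (\<lambda>_. 1) (\<lambda>x. x) (\<lambda>_. 0) (prodset 1 Us) = 1 / ereal r"
proof -
  have U: "prodset 1 Us = block_interval 1" and V: "prodset 1 Us \<inter> C = block_interval r"
    unfolding Us_def C_def prodset_unit_interval using block_interval_Int[OF assms(2)] by simp_all
  show "rho (prodset 1 Us) (Proj 1 (prodset 1 Us \<inter> C)) = r"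
    and "rho (prodset 1 Us) (prodset 1 Us \<inter> C) = r"
    unfolding V unfolding U Proj_block_interval using rho_block_interval assms(1) by simp_all
  show "z_st 1 g (\<lambda>_. 1) (\<lambda>x. x) (\<lambda>_. 0) (prodset 1 Us \<inter> C)
           / z_st 1 g (\<lambda>_. 1) (\<lambda>x. x) (\<lambda>_. 0) (prodset 1 Us) = 1 / ereal r"
    and "z_ad 1 g (\<lambda>_. 1) (\<lambda>x. x) (\<lambda>_. 0) (prodset 1 Us \<inter> C)
           / z_ad 1 g (\<lambda>_. 1) (\<lambda>x. x) (\<lambda>_. 0) (prodset 1 Us) = 1 / ereal r"
    unfolding V unfolding U g_def using z_st_block_interval z_ad_block_interval assms(1)
    by (simp_all add: one_ereal_def)
  show "setting 1 Us C (\<lambda>_. 1) (\<lambda>x. x) (\<lambda>_. 0) g"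
    unfolding setting_def V unfolding U Proj_block_interval g_def
    using assms(1,2) rho_set_block_interval rho_block_interval z_st_block_interval z_ad_block_interval
    by (auto simp: Us_def C_def convex_on_def concave_on_iff algebra_simps
        block_interval_def blockvecs_def)
qed

theorem theorem10:
  shows
  "(\<forall>(m::nat) (Us :: nat \<Rightarrow> 'c::euclidean_space set) C b
       (f1 :: 'a::euclidean_space \<Rightarrow> real) (f2 :: 'b::euclidean_space \<Rightarrow> real) g.
      setting m Us C b f1 f2 g \<longrightarrow>
        z_st m g b f1 f2 (prodset m Us \<inter> C) / z_st m g b f1 f2 (prodset m Us)
          \<le> 1 / ereal (rho (prodset m Us) (Proj m (prodset m Us \<inter> C))) \<and>
        z_ad m g b f1 f2 (prodset m Us \<inter> C) / z_ad m g b f1 f2 (prodset m Us)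
          \<le> 1 / ereal (rho (prodset m Us) (prodset m Us \<inter> C)))
   \<and>
   (\<forall>r::real. 0 < r \<and> r \<le> 1 \<longrightarrow>
      (\<exists>(m::nat) (Us :: nat \<Rightarrow> real set) C b (f1 :: real \<Rightarrow> real) (f2 :: real \<Rightarrow> real) g.
         setting m Us C b f1 f2 g \<and>
         rho (prodset m Us) (Proj m (prodset m Us \<inter> C)) = r \<and>
         z_st m g b f1 f2 (prodset m Us \<inter> C) / z_st m g b f1 f2 (prodset m Us)
           = 1 / ereal (rho (prodset m Us) (Proj m (prodset m Us \<inter> C))))
    \<and> (\<exists>(m::nat) (Us :: nat \<Rightarrow> real set) C b (f1 :: real \<Rightarrow> real) (f2 :: real \<Rightarrow> real) g.
         setting m Us C b f1 f2 g \<and>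
         rho (prodset m Us) (prodset m Us \<inter> C) = r \<and>
         z_ad m g b f1 f2 (prodset m Us \<inter> C) / z_ad m g b f1 f2 (prodset m Us)
           = 1 / ereal (rho (prodset m Us) (prodset m Us \<inter> C))))"
proof (intro conjI allI impI)
  fix m and Us :: "nat \<Rightarrow> 'c::euclidean_space set" and C b g
    and f1 :: "'a::euclidean_space \<Rightarrow> real" and f2 :: "'b::euclidean_space \<Rightarrow> real"
  assume "setting m Us C b f1 f2 g"
  then show "z_st m g b f1 f2 (prodset m Us \<inter> C) / z_st m g b f1 f2 (prodset m Us)
          \<le> 1 / ereal (rho (prodset m Us) (Proj m (prodset m Us \<inter> C)))"
    and "z_ad m g b f1 f2 (prodset m Us \<inter> C) / z_ad m g b f1 f2 (prodset m Us)
          \<le> 1 / ereal (rho (prodset m Us) (prodset m Us \<inter> C))"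
    by (rule setting_ratio_bounds)+
next
  fix r :: real
  assume "0 < r \<and> r \<le> 1"
  then have r: "0 < r" "r \<le> 1" by simp_all
  note example = example_attains_bounds[OF r]
  show "\<exists>m (Us :: nat \<Rightarrow> real set) C b (f1 :: real \<Rightarrow> real) (f2 :: real \<Rightarrow> real) g.
      setting m Us C b f1 f2 g \<and>
      rho (prodset m Us) (Proj m (prodset m Us \<inter> C)) = r \<and>
      z_st m g b f1 f2 (prodset m Us \<inter> C) / z_st m g b f1 f2 (prodset m Us)
        = 1 / ereal (rho (prodset m Us) (Proj m (prodset m Us \<inter> C)))"
    by (intro exI conjI, rule example(1)) (simp_all only: example(2,4))
  show "\<exists>m (Us :: nat \<Rightarrow> real set) C b (f1 :: real \<Rightarrow> real) (f2 :: real \<Rightarrow> real) g.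
      setting m Us C b f1 f2 g \<and>
      rho (prodset m Us) (prodset m Us \<inter> C) = r \<and>
      z_ad m g b f1 f2 (prodset m Us \<inter> C) / z_ad m g b f1 f2 (prodset m Us)
        = 1 / ereal (rho (prodset m Us) (prodset m Us \<inter> C))"
    by (intro exI conjI, rule example(1)) (simp_all only: example(3,5))
qed

end
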